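(* Let $A=(\Sigma,q,N,\delta)$ be a partitioned LQCA with local transition matrix $Q$. Then the following are equivalent: (1) $Q$ is unitary; (2) $A$ is well-formed; (3) the time evolution operator $U_A$ is unitary.
   Context: A linear quantum cellular automaton (LQCA) is a tuple $A=(\Sigma,q,N,\delta)$ where $\Sigma$ is a finite nonempty set of states, $N=(a_1,\dots,a_r)$ is a strictly increasing sequence of integers, $\delta:\Sigma^r\to\mathbb C^\Sigma$ satisfies $\|\delta(w)\|>0$ for all $w$, and $q\in\Sigma$ satisfies $[\delta(q,\dots,q)](x)=1$ if $x=q$ and $0$ otherwise. A configuration is a map $c:\mathbb Z\to\Sigma$ with $c_i\ne q$ for only finitely many $i$; $\mathcal C_A$ is the set of configurations. With $c_{i+N}=(c_{i+a_1},\dots,c_{i+a_r})$, the time evolution operator is $U_A(d,c)=\prod_{i\in\mathbb Z}[\delta(c_{i+N})](d_i)$, viewed as the linear operator on $\ell_2(\mathcal C_A)$ sending $u$ to $d\mapsto\sum_cU_A(d,c)u(c)$. $A$ is well-formed if $U_A$ preserves the $\ell_2$ norm; $U_A$ is unitary if it is norm preserving and bijective. An LQCA is partitioned (PLQCA) if $\Sigma=\Sigma_1\times\cdots\times\Sigma_r$ for finite nonempty sets $\Sigma_j$, and $\delta=\delta_Q\circ\delta_p$ where $\delta_p:\Sigma^r\to\Sigma$ is $\delta_p((x_{1,1},\dots,x_{1,r}),\dots,(x_{r,1},\dots,x_{r,r}))=(x_{1,1},x_{2,2},\dots,x_{r,r})$ and $\delta_Q:\Sigma\to\mathbb C^\Sigma$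 is arbitrary (subject to $\delta$ making $A$ an LQCA). The local transition matrix is the $\Sigma\times\Sigma$ complex matrix $Q(y,x)=[\delta_Q(x)](y)$. *)

theory Defs
  imports "HOL-Analysis.Analysis"
begin

text \<open>A local rule delta maps a neighbourhood word (a list
of length r over S) to a vector in C^S, represented as a function 's => complex
(only its values on S matter).\<close>

definition vnorm :: "'s set \<Rightarrow> ('s \<Rightarrow> complex) \<Rightarrow> real" where
  "vnorm S f = sqrt (\<Sum>x\<in>S. (cmod (f x))\<^sup>2)"

definition lqca :: "'s set \<Rightarrow> 's \<Rightarrow> int list \<Rightarrow> ('s list \<Rightarrow> 's \<Rightarrow> complex) \<Rightarrow> bool" where
  "lqca S q N \<delta> \<longleftrightarrow>
     finite S \<and> S \<noteq> {} \<and> sorted_wrt (<) N \<and> q \<in> S \<and>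
     (\<forall>w. length w = length N \<and> set w \<subseteq> S \<longrightarrow> vnorm S (\<delta> w) > 0) \<and>
     (\<forall>x\<in>S. \<delta> (replicate (length N) q) x = (if x = q then 1 else 0))"

definition configs :: "'s set \<Rightarrow> 's \<Rightarrow> (int \<Rightarrow> 's) set" where
  "configs S q = {c. (\<forall>i. c i \<in> S) \<and> finite {i. c i \<noteq> q}}"

definition nbhd :: "(int \<Rightarrow> 's) \<Rightarrow> int list \<Rightarrow> int \<Rightarrow> 's list" where
  "nbhd c N i = map (\<lambda>a. c (i + a)) N"

text \<open>The matrix entry U_A(d,c) = prod over i in Z of delta(c_{i+N})(d_i).  All
factors with d_i = q and c_{i+N} = (q,...,q) equal delta(q,...,q)(q) = 1, so the
infinite product is the finite product over the remaining cells.\<close>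

definition U_coef :: "'s \<Rightarrow> int list \<Rightarrow> ('s list \<Rightarrow> 's \<Rightarrow> complex)
                       \<Rightarrow> (int \<Rightarrow> 's) \<Rightarrow> (int \<Rightarrow> 's) \<Rightarrow> complex" where
  "U_coef q N \<delta> d c =
     (\<Prod>i \<in> {i. d i \<noteq> q \<or> (\<exists>a\<in>set N. c (i + a) \<noteq> q)}. \<delta> (nbhd c N i) (d i))"

definition l2 :: "'s set \<Rightarrow> 's \<Rightarrow> ((int \<Rightarrow> 's) \<Rightarrow> complex) set" where
  "l2 S q = {u. (\<forall>c. c \<notin> configs S q \<longrightarrow> u c = 0) \<and>
                (\<lambda>c. (cmod (u c))\<^sup>2) summable_on configs S q}"

definition l2norm :: "'s set \<Rightarrow> 's \<Rightarrow> ((int \<Rightarrow> 's) \<Rightarrow> complex) \<Rightarrow> real" where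
  "l2norm S q u = sqrt (\<Sum>\<^sub>\<infinity>c\<in>configs S q. (cmod (u c))\<^sup>2)"

definition U_op :: "'s set \<Rightarrow> 's \<Rightarrow> int list \<Rightarrow> ('s list \<Rightarrow> 's \<Rightarrow> complex)
                     \<Rightarrow> ((int \<Rightarrow> 's) \<Rightarrow> complex) \<Rightarrow> ((int \<Rightarrow> 's) \<Rightarrow> complex)" where
  "U_op S q N \<delta> u =
     (\<lambda>d. if d \<in> configs S q then (\<Sum>\<^sub>\<infinity>c\<in>configs S q. U_coef q N \<delta> d c * u c) else 0)"

definition well_formed :: "'s set \<Rightarrow> 's \<Rightarrow> int list \<Rightarrow> ('s list \<Rightarrow> 's \<Rightarrow> complex) \<Rightarrow> bool" where
  "well_formed S q N \<delta> \<longleftrightarrow>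
     (\<forall>u \<in> l2 S q.
        (\<forall>d \<in> configs S q. (\<lambda>c. U_coef q N \<delta> d c * u c) summable_on configs S q) \<and>
        U_op S q N \<delta> u \<in> l2 S q \<and>
        l2norm S q (U_op S q N \<delta> u) = l2norm S q u)"

definition unitary_evolution :: "'s set \<Rightarrow> 's \<Rightarrow> int list \<Rightarrow> ('s list \<Rightarrow> 's \<Rightarrow> complex) \<Rightarrow> bool" where
  "unitary_evolution S q N \<delta> \<longleftrightarrow>
     well_formed S q N \<delta> \<and> bij_betw (U_op S q N \<delta>) (l2 S q) (l2 S q)"

text \<open>Sigma = Sigma_1 x ... x Sigma_r, with tuples represented as lists of length r
(component j, 0-based, lies in Sigs j).\<close>

definition PSig :: "(nat \<Rightarrow> 'a set) \<Rightarrow> nat \<Rightarrow> 'a list set" where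
  "PSig Sigs r = {x. length x = r \<and> (\<forall>j<r. x ! j \<in> Sigs j)}"

definition delta_p :: "nat \<Rightarrow> 'a list list \<Rightarrow> 'a list" where
  "delta_p r w = map (\<lambda>j. (w ! j) ! j) [0..<r]"

definition unitary_mat :: "'s set \<Rightarrow> ('s \<Rightarrow> 's \<Rightarrow> complex) \<Rightarrow> bool" where
  "unitary_mat S Q \<longleftrightarrow>
     (\<forall>x\<in>S. \<forall>x'\<in>S. (\<Sum>y\<in>S. cnj (Q y x) * Q y x') = (if x = x' then 1 else 0)) \<and>
     (\<forall>y\<in>S. \<forall>y'\<in>S. (\<Sum>x\<in>S. Q y x * cnj (Q y' x)) = (if y = y' then 1 else 0))"

end

(* If delta = delta_Q o delta_p, the matrix entry U_A(d, c) is the product over all cells i of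
   Q(d_i, (sigma c)_i), where the bijection sigma of configurations takes component j of cell i
   from cell i + a_j.  So U_A is the infinite tensor power of Q composed with a permutation of
   configurations.  When Q is unitary (and fixes the quiescent state), each row and column of this
   kernel has finitely many nonzero entries and the rows and columns are orthonormal; this makes
   U_A a norm-preserving bijection of l2 whose inverse is given by the adjoint kernel.
   Conversely, a well-formed U_A maps the vector supported on the sigma-preimages of the
   one-cell configurations with values a to the vector Q a placed at cell 0, so Q is an isometry
   of the finite-dimensional space C^Sigma and hence unitary. *)

theory Submission
  imports Defs "Jordan_Normal_Form.Determinant"
begin

lemma infsum_finite_support:
  assumes "finite F" "F \<subseteq> A" "\<And>x. x \<in> A \<Longrightarrow> x \<notin> F \<Longrightarrow> f x = 0"
  shows "f summable_on A" and "infsum f A = sum f F"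
proof -
  have "f summable_on A \<longleftrightarrow> f summable_on F"
    by (rule summable_on_cong_neutral) (use assms in auto)
  then show "f summable_on A" using assms(1) by simp
  have "infsum f A = infsum f F"
    by (rule infsum_cong_neutral) (use assms in auto)
  then show "infsum f A = sum f F" using assms(1) by simp
qed

lemma infsum_image_finite_support:
  assumes "finite S" "inj_on g S" "g ` S \<subseteq> A" "\<And>x. x \<in> A \<Longrightarrow> x \<notin> g ` S \<Longrightarrow> f x = 0"
  shows "infsum f A = (\<Sum>x\<in>S. f (g x))"
  using infsum_finite_support(2)[of "g ` S" A f] assms by (simp add: sum.reindex)

lemma of_real_cmod_power2: "complex_of_real ((cmod z)\<^sup>2) = cnj z * z"
  by (simp add: complex_norm_square mult.commute del: of_real_power)

section \<open>Operators given by kernels\<close>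

definition l2_space :: "'c set \<Rightarrow> ('c \<Rightarrow> complex) set" where
  "l2_space X = {u. (\<forall>c. c \<notin> X \<longrightarrow> u c = 0) \<and> (\<lambda>c. (cmod (u c))\<^sup>2) summable_on X}"

definition kernel_op :: "'c set \<Rightarrow> ('c \<Rightarrow> 'c \<Rightarrow> complex) \<Rightarrow> ('c \<Rightarrow> complex) \<Rightarrow> 'c \<Rightarrow> complex" where
  "kernel_op X K u = (\<lambda>d. if d \<in> X then (\<Sum>\<^sub>\<infinity>c\<in>X. K d c * u c) else 0)"

definition kernel_adjoint :: "('d \<Rightarrow> 'c \<Rightarrow> complex) \<Rightarrow> 'c \<Rightarrow> 'd \<Rightarrow> complex" where
  "kernel_adjoint K = (\<lambda>c d. cnj (K d c))"

definition orthonormal_columns :: "'c set \<Rightarrow> ('c \<Rightarrow> 'c \<Rightarrow> complex) \<Rightarrow> bool" where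
  "orthonormal_columns X K \<longleftrightarrow>
     (\<forall>c\<in>X. finite {d\<in>X. K d c \<noteq> 0}) \<and>
     (\<forall>c\<in>X. \<forall>c'\<in>X. (\<Sum>d | d \<in> X \<and> K d c \<noteq> 0. cnj (K d c) * K d c') = (if c = c' then 1 else 0))"

definition unitary_kernel :: "'c set \<Rightarrow> ('c \<Rightarrow> 'c \<Rightarrow> complex) \<Rightarrow> bool" where
  "unitary_kernel X K \<longleftrightarrow> orthonormal_columns X K \<and> orthonormal_columns X (kernel_adjoint K)"

lemma kernel_adjoint_adjoint [simp]: "kernel_adjoint (kernel_adjoint K) = K"
  by (simp add: kernel_adjoint_def)

lemma unitary_kernel_adjoint: "unitary_kernel X K \<Longrightarrow> unitary_kernel X (kernel_adjoint K)"
  by (simp add: unitary_kernel_def)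

lemma orthonormal_columns_finite_iff:
  assumes "finite X"
  shows "orthonormal_columns X K \<longleftrightarrow>
           (\<forall>c\<in>X. \<forall>c'\<in>X. (\<Sum>d\<in>X. cnj (K d c) * K d c') = (if c = c' then 1 else 0))"
proof -
  have "(\<Sum>d | d \<in> X \<and> K d c \<noteq> 0. cnj (K d c) * K d c') = (\<Sum>d\<in>X. cnj (K d c) * K d c')" for c c'
    by (rule sum.mono_neutral_left) (use assms in auto)
  then show ?thesis using assms by (simp add: orthonormal_columns_def)
qed

lemma unitary_mat_iff_unitary_kernel: "finite S \<Longrightarrow> unitary_mat S Q \<longleftrightarrow> unitary_kernel S Q"
  by (simp add: unitary_mat_def unitary_kernel_def orthonormal_columns_finite_iff kernel_adjoint_def
      mult.commute)

lemma orthonormal_columns_cong: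
  assumes "\<And>d c. d \<in> X \<Longrightarrow> c \<in> X \<Longrightarrow> K' d c = K d c"
  shows "orthonormal_columns X K' \<longleftrightarrow> orthonormal_columns X K"
proof -
  have supp: "{d. d \<in> X \<and> K' d c \<noteq> 0} = {d. d \<in> X \<and> K d c \<noteq> 0}" if "c \<in> X" for c
    using assms that by auto
  have "(\<Sum>d | d \<in> X \<and> K' d c \<noteq> 0. cnj (K' d c) * K' d c')
      = (\<Sum>d | d \<in> X \<and> K d c \<noteq> 0. cnj (K d c) * K d c')"
    if "c \<in> X" "c' \<in> X" for c c'
    unfolding supp[OF that(1)] using assms that by (intro sum.cong) auto
  then show ?thesis using supp by (simp add: orthonormal_columns_def)
qed

lemma unitary_kernel_cong:
  assumes "\<And>d c. d \<in> X \<Longrightarrow> c \<in> X \<Longrightarrow> K' d c = K d c"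
  shows "unitary_kernel X K' \<longleftrightarrow> unitary_kernel X K"
proof -
  have "orthonormal_columns X (kernel_adjoint K') \<longleftrightarrow> orthonormal_columns X (kernel_adjoint K)"
    using assms by (intro orthonormal_columns_cong) (simp add: kernel_adjoint_def)
  then show ?thesis using orthonormal_columns_cong[of X K' K] assms by (simp add: unitary_kernel_def)
qed

lemma orthonormal_columns_reindex_columns:
  assumes K: "orthonormal_columns X K" and P: "\<And>c. c \<in> X \<Longrightarrow> P c \<in> X" "inj_on P X"
  shows "orthonormal_columns X (\<lambda>d c. K d (P c))"
  using K P unfolding orthonormal_columns_def by (auto dest: inj_onD)

lemma orthonormal_columns_reindex_rows:
  assumes K: "orthonormal_columns X K" and P: "bij_betw P X X"
  shows "orthonormal_columns X (\<lambda>d c. K (P d) c)"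
proof -
  have supp: "bij_betw P {d. d \<in> X \<and> K (P d) c \<noteq> 0} {e. e \<in> X \<and> K e c \<noteq> 0}" for c
  proof (rule bij_betw_subset[OF P])
    show "P ` {d. d \<in> X \<and> K (P d) c \<noteq> 0} = {e. e \<in> X \<and> K e c \<noteq> 0}"
      using P by (force simp: bij_betw_def)
  qed auto
  have "(\<Sum>d | d \<in> X \<and> K (P d) c \<noteq> 0. cnj (K (P d) c) * K (P d) c')
      = (\<Sum>e | e \<in> X \<and> K e c \<noteq> 0. cnj (K e c) * K e c')" for c c'
    using sum.reindex_bij_betw[OF supp, of "\<lambda>e. cnj (K e c) * K e c'"] .
  then show ?thesis
    using K unfolding orthonormal_columns_def by (simp add: bij_betw_finite[OF supp])
qed

lemma unitary_kernel_reindex_columns: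
  assumes "unitary_kernel X K" "bij_betw P X X"
  shows "unitary_kernel X (\<lambda>d c. K d (P c))"
proof -
  have "kernel_adjoint (\<lambda>d c. K d (P c)) = (\<lambda>c d. kernel_adjoint K (P c) d)"
    by (simp add: kernel_adjoint_def)
  then show ?thesis
    using assms orthonormal_columns_reindex_columns[of X K P]
      orthonormal_columns_reindex_rows[of X "kernel_adjoint K" P]
    by (simp add: unitary_kernel_def bij_betw_apply bij_betw_imp_inj_on)
qed

lemma kernel_op_eq_sum:
  assumes "d \<in> X" "finite F" "F \<subseteq> X" "\<And>c. c \<in> X \<Longrightarrow> c \<notin> F \<Longrightarrow> K d c * u c = 0"
  shows "kernel_op X K u d = (\<Sum>c\<in>F. K d c * u c)"
  using infsum_finite_support(2)[OF assms(2-4)] assms(1) by (simp add: kernel_op_def)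

lemma orthonormal_columns_parseval:
  assumes K: "orthonormal_columns X K" and E: "finite E" "E \<subseteq> X"
  defines "D \<equiv> {d\<in>X. \<exists>e\<in>E. K d e \<noteq> 0}"
  shows "finite D" and "(\<Sum>d\<in>D. (cmod (\<Sum>e\<in>E. K d e * u e))\<^sup>2) = (\<Sum>e\<in>E. (cmod (u e))\<^sup>2)"
proof -
  have "D = (\<Union>e\<in>E. {d\<in>X. K d e \<noteq> 0})" unfolding D_def by auto
  then show fin_D: "finite D" using K E unfolding orthonormal_columns_def by auto
  have orth: "(\<Sum>d\<in>D. cnj (K d e) * K d e') = (if e = e' then 1 else 0)" if "e \<in> E" "e' \<in> E" for e e'
  proof -
    have "(\<Sum>d\<in>D. cnj (K d e) * K d e') = (\<Sum>d | d \<in> X \<and> K d e \<noteq> 0. cnj (K d e) * K d e')"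
      by (rule sum.mono_neutral_right) (use fin_D that in \<open>auto simp: D_def\<close>)
    also have "\<dots> = (if e = e' then 1 else 0)" using K that E unfolding orthonormal_columns_def by blast
    finally show ?thesis .
  qed
  have "complex_of_real (\<Sum>d\<in>D. (cmod (\<Sum>e\<in>E. K d e * u e))\<^sup>2)
      = (\<Sum>d\<in>D. cnj (\<Sum>e\<in>E. K d e * u e) * (\<Sum>e'\<in>E. K d e' * u e'))"
    by (simp only: of_real_sum of_real_cmod_power2)
  also have "\<dots> = (\<Sum>d\<in>D. \<Sum>e\<in>E. \<Sum>e'\<in>E. cnj (u e) * u e' * (cnj (K d e) * K d e'))"
    by (simp add: sum_distrib_left sum_distrib_right algebra_simps)
  also have "\<dots> = (\<Sum>e\<in>E. \<Sum>e'\<in>E. cnj (u e) * u e' * (\<Sum>d\<in>D. cnj (K d e) * K d e'))"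
    by (simp add: sum_distrib_left sum.swap[of _ D])
  also have "\<dots> = (\<Sum>e\<in>E. cnj (u e) * u e)"
    using E by (simp add: orth if_distrib cong: if_cong)
  also have "\<dots> = complex_of_real (\<Sum>e\<in>E. (cmod (u e))\<^sup>2)"
    by (simp only: of_real_sum of_real_cmod_power2)
  finally show "(\<Sum>d\<in>D. (cmod (\<Sum>e\<in>E. K d e * u e))\<^sup>2) = (\<Sum>e\<in>E. (cmod (u e))\<^sup>2)"
    using of_real_eq_iff by blast
qed

lemma kernel_op_finite_bessel:
  assumes K: "unitary_kernel X K" and u: "u \<in> l2_space X" and D0: "finite D0" "D0 \<subseteq> X"
  shows "(\<Sum>d\<in>D0. (cmod (kernel_op X K u d))\<^sup>2) \<le> (\<Sum>\<^sub>\<infinity>c\<in>X. (cmod (u c))\<^sup>2)"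
proof -
  define E where "E = {e\<in>X. \<exists>d\<in>D0. K d e \<noteq> 0}"
  have "E = (\<Union>d\<in>D0. {e\<in>X. kernel_adjoint K e d \<noteq> 0})" by (auto simp: E_def kernel_adjoint_def)
  then have fin_E: "finite E" using K D0 by (auto simp: unitary_kernel_def orthonormal_columns_def)
  have E_sub: "E \<subseteq> X" by (auto simp: E_def)
  define D where "D = {d\<in>X. \<exists>e\<in>E. K d e \<noteq> 0}"
  have cols: "orthonormal_columns X K" using K by (simp add: unitary_kernel_def)
  note fin_D = orthonormal_columns_parseval(1)[OF cols fin_E E_sub, folded D_def]
  have "(\<Sum>d\<in>D0. (cmod (kernel_op X K u d))\<^sup>2) = (\<Sum>d\<in>D0. (cmod (\<Sum>e\<in>E. K d e * u e))\<^sup>2)"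
    using D0 fin_E E_sub by (intro sum.cong refl, subst kernel_op_eq_sum) (auto simp: E_def)
  also have "\<dots> \<le> (\<Sum>d\<in>D0 \<union> D. (cmod (\<Sum>e\<in>E. K d e * u e))\<^sup>2)"
    by (rule sum_mono2) (use D0 fin_D in auto)
  also have "\<dots> = (\<Sum>d\<in>D. (cmod (\<Sum>e\<in>E. K d e * u e))\<^sup>2)"
    by (rule sum.mono_neutral_right) (use D0 fin_D in \<open>auto simp: D_def intro!: sum.neutral\<close>)
  also have "\<dots> = (\<Sum>e\<in>E. (cmod (u e))\<^sup>2)"
    unfolding D_def by (rule orthonormal_columns_parseval(2)[OF cols fin_E E_sub])
  also have "\<dots> = (\<Sum>\<^sub>\<infinity>e\<in>E. (cmod (u e))\<^sup>2)" using fin_E by simp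
  also have "\<dots> \<le> (\<Sum>\<^sub>\<infinity>c\<in>X. (cmod (u c))\<^sup>2)"
    by (rule infsum_mono_neutral) (use u fin_E E_sub in \<open>auto simp: l2_space_def\<close>)
  finally show ?thesis .
qed

lemma kernel_op_in_l2:
  assumes "unitary_kernel X K" "u \<in> l2_space X"
  shows "kernel_op X K u \<in> l2_space X"
proof -
  have "(\<lambda>c. (cmod (kernel_op X K u c))\<^sup>2) summable_on X"
    using kernel_op_finite_bessel[OF assms]
    by (intro nonneg_bdd_above_summable_on bdd_aboveI) auto
  then show ?thesis by (simp add: l2_space_def kernel_op_def)
qed

lemma kernel_op_norm_le:
  assumes "unitary_kernel X K" "u \<in> l2_space X"
  shows "(\<Sum>\<^sub>\<infinity>c\<in>X. (cmod (kernel_op X K u c))\<^sup>2) \<le> (\<Sum>\<^sub>\<infinity>c\<in>X. (cmod (u c))\<^sup>2)"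
  using kernel_op_in_l2[OF assms] kernel_op_finite_bessel[OF assms]
  by (intro infsum_le_finite_sums) (auto simp: l2_space_def)

lemma kernel_op_adjoint_inverse:
  assumes K: "unitary_kernel X K" and u: "\<And>c. c \<notin> X \<Longrightarrow> u c = 0"
  shows "kernel_op X (kernel_adjoint K) (kernel_op X K u) = u"
proof
  fix c
  show "kernel_op X (kernel_adjoint K) (kernel_op X K u) c = u c"
  proof (cases "c \<in> X")
    case False
    then show ?thesis using u by (simp add: kernel_op_def)
  next
    case c: True
    define D where "D = {d\<in>X. K d c \<noteq> 0}"
    define E where "E = {e\<in>X. \<exists>d\<in>D. K d e \<noteq> 0}"
    have cols: "orthonormal_columns X K" and rows: "orthonormal_columns X (kernel_adjoint K)"
      using K by (auto simp: unitary_kernel_def)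
    have fin_D: "finite D" using cols c by (simp add: orthonormal_columns_def D_def)
    have "E = (\<Union>d\<in>D. {e\<in>X. kernel_adjoint K e d \<noteq> 0})" by (auto simp: E_def kernel_adjoint_def)
    then have fin_E: "finite E" using rows fin_D by (auto simp: orthonormal_columns_def D_def)
    have orth: "(\<Sum>d\<in>D. cnj (K d c) * K d e) = (if c = e then 1 else 0)" if "e \<in> X" for e
      using cols c that unfolding orthonormal_columns_def D_def by blast
    then have "D \<noteq> {}" using c by force
    then have c_E: "c \<in> E" using c by (auto simp: E_def D_def)
    have "kernel_op X (kernel_adjoint K) (kernel_op X K u) c = (\<Sum>d\<in>D. cnj (K d c) * kernel_op X K u d)"
      using c fin_D by (subst kernel_op_eq_sum[where F = D]) (auto simp: D_def kernel_adjoint_def)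
    also have "\<dots> = (\<Sum>d\<in>D. cnj (K d c) * (\<Sum>e\<in>E. K d e * u e))"
      using fin_E by (intro sum.cong refl, subst kernel_op_eq_sum[where F = E]) (auto simp: E_def D_def)
    also have "\<dots> = (\<Sum>e\<in>E. u e * (\<Sum>d\<in>D. cnj (K d c) * K d e))"
      by (simp add: sum_distrib_left sum.swap[of _ D] algebra_simps)
    also have "\<dots> = u c"
      using fin_E c_E by (simp add: orth E_def if_distrib cong: if_cong)
    finally show ?thesis .
  qed
qed

lemma unitary_kernel_op_norm:
  assumes K: "unitary_kernel X K" and u: "u \<in> l2_space X"
  shows "(\<Sum>\<^sub>\<infinity>c\<in>X. (cmod (kernel_op X K u c))\<^sup>2) = (\<Sum>\<^sub>\<infinity>c\<in>X. (cmod (u c))\<^sup>2)"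
proof (rule antisym)
  show "(\<Sum>\<^sub>\<infinity>c\<in>X. (cmod (kernel_op X K u c))\<^sup>2) \<le> (\<Sum>\<^sub>\<infinity>c\<in>X. (cmod (u c))\<^sup>2)"
    by (rule kernel_op_norm_le[OF K u])
  have "u = kernel_op X (kernel_adjoint K) (kernel_op X K u)"
    using kernel_op_adjoint_inverse[OF K] u by (simp add: l2_space_def)
  then show "(\<Sum>\<^sub>\<infinity>c\<in>X. (cmod (u c))\<^sup>2) \<le> (\<Sum>\<^sub>\<infinity>c\<in>X. (cmod (kernel_op X K u c))\<^sup>2)"
    using kernel_op_norm_le[OF unitary_kernel_adjoint[OF K] kernel_op_in_l2[OF K u]] by simp
qed

lemma unitary_kernel_row_summable:
  assumes K: "unitary_kernel X K" and d: "d \<in> X"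
  shows "(\<lambda>c. K d c * u c) summable_on X"
proof (rule infsum_finite_support(1))
  show "finite {c\<in>X. K d c \<noteq> 0}"
    using K d by (simp add: unitary_kernel_def orthonormal_columns_def kernel_adjoint_def)
qed auto

lemma bij_betw_unitary_kernel_op:
  assumes K: "unitary_kernel X K"
  shows "bij_betw (kernel_op X K) (l2_space X) (l2_space X)"
proof (rule bij_betw_byWitness[where f' = "kernel_op X (kernel_adjoint K)"])
  show "\<forall>u\<in>l2_space X. kernel_op X (kernel_adjoint K) (kernel_op X K u) = u"
    using kernel_op_adjoint_inverse[OF K] by (simp add: l2_space_def)
  show "\<forall>u\<in>l2_space X. kernel_op X K (kernel_op X (kernel_adjoint K) u) = u"
    using kernel_op_adjoint_inverse[OF unitary_kernel_adjoint[OF K]] by (simp add: l2_space_def)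
qed (use kernel_op_in_l2 K unitary_kernel_adjoint in blast)+

section \<open>Unitary matrices\<close>

lemma isometry_two_point:
  fixes Q :: "'s \<Rightarrow> 's \<Rightarrow> complex"
  assumes S: "finite S"
    and iso: "\<And>a. (\<Sum>y\<in>S. (cmod (\<Sum>x\<in>S. Q y x * a x))\<^sup>2) = (\<Sum>x\<in>S. (cmod (a x))\<^sup>2)"
    and z: "z \<in> S" "z' \<in> S"
  shows "(\<Sum>y\<in>S. cnj (Q y z + t * Q y z') * (Q y z + t * Q y z'))
           = (if z = z' then cnj (1 + t) * (1 + t) else 1 + cnj t * t)"
proof -
  define a where "a w = (if w = z then 1 else 0) + t * (if w = z' then 1 else 0)" for w
  have "Q y w * a w = (if w = z then Q y z else 0) + (if w = z' then t * Q y z' else 0)" for y w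
    by (simp add: a_def algebra_simps)
  then have Qa: "(\<Sum>x\<in>S. Q y x * a x) = Q y z + t * Q y z'" for y
    using S z by (simp add: sum.distrib)
  have "(\<Sum>y\<in>S. cnj (Q y z + t * Q y z') * (Q y z + t * Q y z')) = (\<Sum>x\<in>S. cnj (a x) * a x)"
    using arg_cong[OF iso[of a], of complex_of_real] by (simp only: of_real_sum of_real_cmod_power2 Qa)
  also have "\<dots> = (if z = z' then cnj (1 + t) * (1 + t) else 1 + cnj t * t)"
  proof (cases "z = z'")
    case True
    then have "cnj (a w) * a w = (if w = z then cnj (1 + t) * (1 + t) else 0)" for w
      by (simp add: a_def)
    then show ?thesis using S z True by simp
  next
    case False
    then have "cnj (a w) * a w = (if w = z then 1 else 0) + (if w = z' then cnj t * t else 0)" for w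
      by (auto simp: a_def)
    then show ?thesis using S z False by (simp add: sum.distrib)
  qed
  finally show ?thesis .
qed

lemma isometry_orthonormal_columns:
  fixes Q :: "'s \<Rightarrow> 's \<Rightarrow> complex"
  assumes S: "finite S"
    and iso: "\<And>a. (\<Sum>y\<in>S. (cmod (\<Sum>x\<in>S. Q y x * a x))\<^sup>2) = (\<Sum>x\<in>S. (cmod (a x))\<^sup>2)"
    and x: "x \<in> S" "x' \<in> S"
  shows "(\<Sum>y\<in>S. cnj (Q y x) * Q y x') = (if x = x' then 1 else 0)"
proof -
  define G where "G z z' = (\<Sum>y\<in>S. cnj (Q y z) * Q y z')" for z z'
  have polar: "G z z + cnj t * t * G z' z' + t * G z z' + cnj t * G z' z
      = (if z = z' then cnj (1 + t) * (1 + t) else 1 + cnj t * t)"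
    if z: "z \<in> S" "z' \<in> S" for z z' t
  proof -
    have "cnj (Q y z + t * Q y z') * (Q y z + t * Q y z')
        = cnj (Q y z) * Q y z + cnj t * t * (cnj (Q y z') * Q y z')
          + t * (cnj (Q y z) * Q y z') + cnj t * (cnj (Q y z') * Q y z)" for y
      by (simp add: algebra_simps)
    then have "(\<Sum>y\<in>S. cnj (Q y z + t * Q y z') * (Q y z + t * Q y z'))
        = G z z + cnj t * t * G z' z' + t * G z z' + cnj t * G z' z"
      by (simp add: G_def sum.distrib sum_distrib_left)
    then show ?thesis using isometry_two_point[OF S iso z] by simp
  qed
  have norm: "G z z = 1" if "z \<in> S" for z
    using polar[OF that that, of 0] by simp
  have "G x x' = 0" if "x \<noteq> x'"
  proof -
    have "G x x' + G x' x = 0"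
      using polar[OF x, of 1] that norm x by simp
    moreover have "\<i> * (G x x' - G x' x) = 0"
      using polar[OF x, of \<i>] that norm x by (simp add: right_diff_distrib)
    ultimately show ?thesis by simp
  qed
  then show ?thesis using norm x by (auto simp: G_def)
qed

lemma unitary_mat_if_orthonormal_columns:
  fixes Q :: "'s \<Rightarrow> 's \<Rightarrow> complex"
  assumes S: "finite S"
    and cols: "\<forall>x\<in>S. \<forall>x'\<in>S. (\<Sum>y\<in>S. cnj (Q y x) * Q y x') = (if x = x' then 1 else 0)"
  shows "unitary_mat S Q"
proof -
  obtain xs where xs: "set xs = S" "distinct xs" using finite_distinct_list[OF S] by blast
  define n where "n = length xs"
  have reindex: "(\<Sum>k<n. f (xs ! k)) = (\<Sum>y\<in>S. f y)" for f :: "'s \<Rightarrow> complex"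
    using sum.reindex_bij_betw[OF bij_betw_nth[OF xs(2) _ xs(1)[symmetric]], of "{..<n}" f]
    by (simp add: n_def)
  define A where "A = mat n n (\<lambda>(i, j). Q (xs ! i) (xs ! j))"
  define B where "B = mat n n (\<lambda>(i, j). cnj (Q (xs ! j) (xs ! i)))"
  have A: "A \<in> carrier_mat n n" and B: "B \<in> carrier_mat n n" by (auto simp: A_def B_def)
  have "B * A = 1\<^sub>m n"
  proof (rule eq_matI)
    fix i j assume "i < dim_row (1\<^sub>m n)" "j < dim_col (1\<^sub>m n)"
    then have ij: "i < n" "j < n" by auto
    have "(B * A) $$ (i, j) = (\<Sum>k<n. cnj (Q (xs ! k) (xs ! i)) * Q (xs ! k) (xs ! j))"
      using ij by (simp add: A_def B_def scalar_prod_def atLeast0LessThan)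
    also have "\<dots> = (\<Sum>y\<in>S. cnj (Q y (xs ! i)) * Q y (xs ! j))"
      by (rule reindex)
    also have "\<dots> = (if xs ! i = xs ! j then 1 else 0)"
      using cols ij xs n_def by auto
    also have "\<dots> = 1\<^sub>m n $$ (i, j)"
      using ij xs(2) n_def by (simp add: nth_eq_iff_index_eq)
    finally show "(B * A) $$ (i, j) = 1\<^sub>m n $$ (i, j)" .
  qed (auto simp: A_def B_def)
  then have AB: "A * B = 1\<^sub>m n" by (rule mat_mult_left_right_inverse[OF B A])
  have rows: "(\<Sum>x\<in>S. Q y x * cnj (Q y' x)) = (if y = y' then 1 else 0)"
    if y: "y \<in> S" "y' \<in> S" for y y'
  proof -
    obtain i where i: "i < n" "xs ! i = y"
      using y(1) xs(1)[symmetric] by (auto simp: in_set_conv_nth n_def)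
    obtain j where j: "j < n" "xs ! j = y'"
      using y(2) xs(1)[symmetric] by (auto simp: in_set_conv_nth n_def)
    have "(\<Sum>x\<in>S. Q y x * cnj (Q y' x)) = (\<Sum>k<n. Q (xs ! i) (xs ! k) * cnj (Q (xs ! j) (xs ! k)))"
      using reindex[of "\<lambda>x. Q y x * cnj (Q y' x)"] i j by simp
    also have "\<dots> = (A * B) $$ (i, j)"
      using i j by (simp add: A_def B_def scalar_prod_def atLeast0LessThan)
    also have "\<dots> = (if i = j then 1 else 0)"
      using AB i j by simp
    also have "\<dots> = (if y = y' then 1 else 0)"
      using i j xs(2) n_def by (auto simp: nth_eq_iff_index_eq)
    finally show ?thesis .
  qed
  show ?thesis using cols rows by (simp add: unitary_mat_def)
qed

lemma unit_column_entries_zero: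
  fixes Q :: "'s \<Rightarrow> 's \<Rightarrow> complex"
  assumes S: "finite S" "x \<in> S" and norm: "(\<Sum>y\<in>S. cnj (Q y x) * Q y x) = 1" and diag: "Q x x = 1"
    and y: "y \<in> S" "y \<noteq> x"
  shows "Q y x = 0"
proof -
  have "complex_of_real (\<Sum>y\<in>S. (cmod (Q y x))\<^sup>2) = 1"
    using norm by (simp only: of_real_sum of_real_cmod_power2)
  then have "(\<Sum>y\<in>S. (cmod (Q y x))\<^sup>2) = 1" using of_real_eq_1_iff by blast
  moreover have "(\<Sum>y\<in>S. (cmod (Q y x))\<^sup>2) = 1 + (\<Sum>y\<in>S - {x}. (cmod (Q y x))\<^sup>2)"
    using S diag by (simp add: sum.remove)
  ultimately have "(\<Sum>y\<in>S - {x}. (cmod (Q y x))\<^sup>2) = 0" by simp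
  then show ?thesis using S y by (simp add: sum_nonneg_eq_0_iff)
qed

section \<open>Tensor powers of a local matrix on configurations\<close>

(* The infinite tensor power of Q restricted to configurations; the omitted factors are Q q q,
   which equals 1 wherever this is used. *)
definition prod_kernel :: "'s \<Rightarrow> ('s \<Rightarrow> 's \<Rightarrow> complex) \<Rightarrow> (int \<Rightarrow> 's) \<Rightarrow> (int \<Rightarrow> 's) \<Rightarrow> complex" where
  "prod_kernel q Q d e = (\<Prod>i | d i \<noteq> q \<or> e i \<noteq> q. Q (d i) (e i))"

definition configs_within :: "'s set \<Rightarrow> 's \<Rightarrow> int set \<Rightarrow> (int \<Rightarrow> 's) set" where
  "configs_within S q G = {d \<in> configs S q. \<forall>i. i \<notin> G \<longrightarrow> d i = q}"

lemma finite_support_configs: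
  "d \<in> configs S q \<Longrightarrow> e \<in> configs S q \<Longrightarrow> finite {i. d i \<noteq> q \<or> e i \<noteq> q}"
  unfolding Collect_disj_eq configs_def by simp

lemma prod_kernel_eq_prod:
  assumes "Q q q = 1" "finite G" "{i. d i \<noteq> q \<or> e i \<noteq> q} \<subseteq> G"
  shows "prod_kernel q Q d e = (\<Prod>i\<in>G. Q (d i) (e i))"
  unfolding prod_kernel_def by (rule prod.mono_neutral_left) (use assms in auto)

lemma prod_kernel_eq_zero:
  assumes "finite {i. d i \<noteq> q \<or> e i \<noteq> q}" "d i \<noteq> q" "Q (d i) (e i) = 0"
  shows "prod_kernel q Q d e = 0"
  unfolding prod_kernel_def using assms by (subst prod_zero_iff) auto

lemma kernel_adjoint_prod_kernel:
  "kernel_adjoint (prod_kernel q Q) = prod_kernel q (kernel_adjoint Q)"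
  by (intro ext) (simp add: kernel_adjoint_def prod_kernel_def disj_commute)

lemma bij_betw_restrict_configs_within:
  assumes "q \<in> S" "finite G"
  shows "bij_betw (\<lambda>d. restrict d G) (configs_within S q G) (PiE G (\<lambda>_. S))"
proof (rule bij_betw_byWitness[where f' = "\<lambda>g i. if i \<in> G then g i else q"])
  show "(\<lambda>g i. if i \<in> G then g i else q) ` PiE G (\<lambda>_. S) \<subseteq> configs_within S q G"
  proof
    fix d assume "d \<in> (\<lambda>g i. if i \<in> G then g i else q) ` PiE G (\<lambda>_. S)"
    then obtain g where g: "g \<in> PiE G (\<lambda>_. S)" "d = (\<lambda>i. if i \<in> G then g i else q)" by blast
    then have "{i. d i \<noteq> q} \<subseteq> G" by auto
    then show "d \<in> configs_within S q G"
      using g assms by (auto simp: configs_within_def configs_def finite_subset)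
  qed
qed (auto simp: configs_within_def configs_def PiE_def extensional_def)

lemma sum_configs_within_prod:
  fixes f :: "int \<Rightarrow> 's \<Rightarrow> complex"
  assumes "finite S" "q \<in> S" "finite G"
  shows "finite (configs_within S q G)"
    and "(\<Sum>d\<in>configs_within S q G. \<Prod>i\<in>G. f i (d i)) = (\<Prod>i\<in>G. \<Sum>y\<in>S. f i y)"
proof -
  note bij = bij_betw_restrict_configs_within[OF assms(2,3)]
  show "finite (configs_within S q G)"
    using bij_betw_finite[OF bij] assms by (simp add: finite_PiE)
  have "(\<Prod>i\<in>G. \<Sum>y\<in>S. f i y) = (\<Sum>g\<in>PiE G (\<lambda>_. S). \<Prod>i\<in>G. f i (g i))"
    by (rule prod_sum_PiE) (use assms in auto)
  also have "\<dots> = (\<Sum>d\<in>configs_within S q G. \<Prod>i\<in>G. f i (restrict d G i))"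
    using sum.reindex_bij_betw[OF bij, of "\<lambda>g. \<Prod>i\<in>G. f i (g i)"] by simp
  finally show "(\<Sum>d\<in>configs_within S q G. \<Prod>i\<in>G. f i (d i)) = (\<Prod>i\<in>G. \<Sum>y\<in>S. f i y)"
    by simp
qed

lemma prod_kernel_column_support:
  assumes Q: "\<And>y. y \<in> S \<Longrightarrow> y \<noteq> q \<Longrightarrow> Q y q = 0"
    and d: "d \<in> configs S q" and e: "e \<in> configs S q" and nz: "prod_kernel q Q d e \<noteq> 0"
  shows "d \<in> configs_within S q {i. e i \<noteq> q}"
proof -
  have "d i = q" if "e i = q" for i
  proof (rule ccontr)
    assume di: "d i \<noteq> q"
    moreover have "d i \<in> S" using d by (simp add: configs_def)
    ultimately have "Q (d i) (e i) = 0" using Q \<open>e i = q\<close> by simp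
    then have "prod_kernel q Q d e = 0"
      by (rule prod_kernel_eq_zero[OF finite_support_configs[OF d e] di])
    then show False using nz by contradiction
  qed
  then show ?thesis using d by (auto simp: configs_within_def)
qed

lemma prod_delta_eq:
  assumes "finite G" "\<And>i. i \<notin> G \<Longrightarrow> e i = e' i"
  shows "(\<Prod>i\<in>G. if e i = e' i then 1 else 0) = (if e = e' then 1 else (0 :: 'a :: comm_semiring_1))"
proof (cases "e = e'")
  case False
  then obtain i where i: "e i \<noteq> e' i" by auto
  then have "i \<in> G" using assms(2) by blast
  then have "(\<Prod>i\<in>G. if e i = e' i then 1 else 0) = (0 :: 'a)"
    using i by (intro prod_zero[OF assms(1)]) auto
  then show ?thesis using False by simp
qed simp

lemma orthonormal_columns_prod_kernel:
  assumes S: "finite S" "q \<in> S" and Q: "orthonormal_columns S Q" "Q q q = 1"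
  shows "orthonormal_columns (configs S q) (prod_kernel q Q)"
proof -
  let ?X = "configs S q"
  have cols: "(\<Sum>y\<in>S. cnj (Q y x) * Q y x') = (if x = x' then 1 else 0)" if "x \<in> S" "x' \<in> S" for x x'
    using Q(1) S that by (simp add: orthonormal_columns_finite_iff)
  have "(\<Sum>y\<in>S. cnj (Q y q) * Q y q) = 1" using cols[OF S(2) S(2)] by simp
  then have "Q y q = 0" if "y \<in> S" "y \<noteq> q" for y
    using unit_column_entries_zero[of S q Q, OF S _ Q(2) that] by simp
  note supp = prod_kernel_column_support[of S q Q, OF this]
  show ?thesis
    unfolding orthonormal_columns_def
  proof (intro conjI ballI)
    fix e assume e: "e \<in> ?X"
    have "finite (configs_within S q {i. e i \<noteq> q})"
      using S e by (intro sum_configs_within_prod(1)) (simp_all add: configs_def)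
    then show "finite {d \<in> ?X. prod_kernel q Q d e \<noteq> 0}"
      by (rule finite_subset[rotated]) (use supp e in blast)
  next
    fix e e' assume e: "e \<in> ?X" "e' \<in> ?X"
    define G where "G = {i. e i \<noteq> q \<or> e' i \<noteq> q}"
    have fin_G: "finite G" using finite_support_configs[OF e] by (simp add: G_def)
    have "(\<Sum>d | d \<in> ?X \<and> prod_kernel q Q d e \<noteq> 0. cnj (prod_kernel q Q d e) * prod_kernel q Q d e')
        = (\<Sum>d\<in>configs_within S q G. cnj (prod_kernel q Q d e) * prod_kernel q Q d e')"
      by (rule sum.mono_neutral_left)
        (use sum_configs_within_prod(1)[OF S fin_G] supp e in \<open>auto simp: configs_within_def G_def\<close>)
    also have "\<dots> = (\<Sum>d\<in>configs_within S q G. \<Prod>i\<in>G. cnj (Q (d i) (e i)) * Q (d i) (e' i))"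
    proof (rule sum.cong[OF refl])
      fix d assume "d \<in> configs_within S q G"
      then have "{i. d i \<noteq> q \<or> e i \<noteq> q} \<subseteq> G" "{i. d i \<noteq> q \<or> e' i \<noteq> q} \<subseteq> G"
        by (auto simp: configs_within_def G_def)
      then show "cnj (prod_kernel q Q d e) * prod_kernel q Q d e'
          = (\<Prod>i\<in>G. cnj (Q (d i) (e i)) * Q (d i) (e' i))"
        by (simp add: prod_kernel_eq_prod[of Q q G, OF Q(2) fin_G] prod.distrib)
    qed
    also have "\<dots> = (\<Prod>i\<in>G. \<Sum>y\<in>S. cnj (Q y (e i)) * Q y (e' i))"
      by (rule sum_configs_within_prod(2)[OF S fin_G])
    also have "\<dots> = (\<Prod>i\<in>G. if e i = e' i then 1 else 0)"
      using e cols by (intro prod.cong refl) (auto simp: configs_def)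
    also have "\<dots> = (if e = e' then 1 else 0)"
      by (rule prod_delta_eq[OF fin_G]) (simp add: G_def)
    finally show "(\<Sum>d | d \<in> ?X \<and> prod_kernel q Q d e \<noteq> 0. cnj (prod_kernel q Q d e) * prod_kernel q Q d e')
        = (if e = e' then 1 else 0)" .
  qed
qed

lemma unitary_kernel_prod_kernel:
  assumes "finite S" "q \<in> S" "unitary_mat S Q" "Q q q = 1"
  shows "unitary_kernel (configs S q) (prod_kernel q Q)"
proof -
  have "orthonormal_columns S Q" "orthonormal_columns S (kernel_adjoint Q)"
    using assms unitary_mat_iff_unitary_kernel by (auto simp: unitary_kernel_def)
  moreover have "kernel_adjoint Q q q = 1" using assms(4) by (simp add: kernel_adjoint_def)
  ultimately show ?thesis
    using orthonormal_columns_prod_kernel[OF assms(1,2)]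
    by (simp add: unitary_kernel_def kernel_adjoint_prod_kernel assms(4))
qed

definition single_config :: "'s \<Rightarrow> 's \<Rightarrow> int \<Rightarrow> 's" where
  "single_config q x = (\<lambda>i. if i = 0 then x else q)"

lemma single_config_in_configs: "q \<in> S \<Longrightarrow> x \<in> S \<Longrightarrow> single_config q x \<in> configs S q"
  by (auto simp: configs_def single_config_def finite_subset[of _ "{0}"])

lemma inj_single_config: "inj (single_config q)"
  by (rule injI) (metis single_config_def)

lemma prod_kernel_single_config:
  assumes Q: "Q q q = 1" "\<And>y. y \<in> S \<Longrightarrow> y \<noteq> q \<Longrightarrow> Q y q = 0"
    and d: "d \<in> configs S q" and x: "q \<in> S" "x \<in> S"
  shows "prod_kernel q Q d (single_config q x)
           = (if d \<in> single_config q ` S then Q (d 0) x else 0)"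
proof (cases "\<forall>i. i \<noteq> 0 \<longrightarrow> d i = q")
  case True
  then have "d = single_config q (d 0)" by (auto simp: single_config_def)
  moreover have "d 0 \<in> S" using d by (simp add: configs_def)
  ultimately have "d \<in> single_config q ` S" by blast
  moreover have "prod_kernel q Q d (single_config q x) = (\<Prod>i\<in>{0}. Q (d i) (single_config q x i))"
    by (rule prod_kernel_eq_prod[of Q q, OF Q(1)]) (use True in \<open>auto simp: single_config_def\<close>)
  ultimately show ?thesis by (simp add: single_config_def)
next
  case False
  then obtain i where i: "i \<noteq> 0" "d i \<noteq> q" by auto
  then have "d \<notin> single_config q ` S" by (auto simp: single_config_def)
  moreover have "prod_kernel q Q d (single_config q x) = 0"
  proof (rule prod_kernel_eq_zero[OF finite_support_configs[OF d] i(2)])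
    show "single_config q x \<in> configs S q" by (rule single_config_in_configs[OF x])
    show "Q (d i) (single_config q x i) = 0"
      using Q(2) d i by (simp add: single_config_def configs_def)
  qed
  ultimately show ?thesis by simp
qed

section \<open>Partitioned cellular automata\<close>

definition partition_shift :: "int list \<Rightarrow> (int \<Rightarrow> 'a list) \<Rightarrow> int \<Rightarrow> 'a list" where
  "partition_shift N c i = map (\<lambda>j. c (i + N ! j) ! j) [0..<length N]"

lemma delta_p_nbhd: "delta_p (length N) (nbhd c N i) = partition_shift N c i"
  by (simp add: delta_p_def nbhd_def partition_shift_def)

lemma finite_neighbourhood_support:
  fixes c :: "int \<Rightarrow> 's" and N :: "int list"
  assumes "finite {i. c i \<noteq> q}"
  shows "finite {i. \<exists>a\<in>set N. c (i + a) \<noteq> q}"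
proof -
  have "{i. \<exists>a\<in>set N. c (i + a) \<noteq> q} = (\<Union>a\<in>set N. (\<lambda>k. k - a) ` {k. c k \<noteq> q})"
    by (auto simp: image_iff; metis add_diff_cancel_right' diff_add_cancel)
  then show ?thesis using assms by simp
qed

lemma partition_shift_support:
  assumes "length q = length N"
  shows "{i. partition_shift N c i \<noteq> q} \<subseteq> {i. \<exists>a\<in>set N. c (i + a) \<noteq> q}"
proof
  fix i assume "i \<in> {i. partition_shift N c i \<noteq> q}"
  then obtain j where "j < length N" "c (i + N ! j) ! j \<noteq> q ! j"
    using assms nth_equalityI[of "partition_shift N c i" q] by (auto simp: partition_shift_def)
  then show "i \<in> {i. \<exists>a\<in>set N. c (i + a) \<noteq> q}" by auto
qed

lemma partition_shift_in_configs:
  assumes q: "q \<in> PSig Sigs (length N)" and c: "c \<in> configs (PSig Sigs (length N)) q"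
  shows "partition_shift N c \<in> configs (PSig Sigs (length N)) q"
proof -
  have "finite {i. partition_shift N c i \<noteq> q}"
    using q c partition_shift_support[of q N c] finite_neighbourhood_support[of c q N]
    by (auto simp: PSig_def configs_def intro: finite_subset)
  then show ?thesis using c by (auto simp: configs_def PSig_def partition_shift_def)
qed

lemma partition_shift_inverse:
  assumes "c \<in> configs (PSig Sigs (length N)) q"
  shows "partition_shift (map uminus N) (partition_shift N c) = c"
proof
  fix k
  have "length (c k) = length N" using assms by (simp add: configs_def PSig_def)
  then show "partition_shift (map uminus N) (partition_shift N c) k = c k"
    by (intro nth_equalityI) (auto simp: partition_shift_def)
qed

lemma bij_betw_partition_shift:
  assumes "q \<in> PSig Sigs (length N)"
  shows "bij_betw (partition_shift N)
           (configs (PSig Sigs (length N)) q) (configs (PSig Sigs (length N)) q)"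
proof (rule bij_betw_byWitness[where f' = "partition_shift (map uminus N)"])
  have "map uminus (map uminus N) = N" by (simp add: map_idI)
  then show "\<forall>c\<in>configs (PSig Sigs (length N)) q.
      partition_shift N (partition_shift (map uminus N) c) = c"
    using partition_shift_inverse[of _ Sigs "map uminus N" q] by simp
  show "partition_shift (map uminus N) ` configs (PSig Sigs (length N)) q
      \<subseteq> configs (PSig Sigs (length N)) q"
    using assms partition_shift_in_configs[of q Sigs "map uminus N"] by auto
  show "\<forall>c\<in>configs (PSig Sigs (length N)) q. partition_shift (map uminus N) (partition_shift N c) = c"
    using partition_shift_inverse by blast
  show "partition_shift N ` configs (PSig Sigs (length N)) q \<subseteq> configs (PSig Sigs (length N)) q"
    using assms partition_shift_in_configs by blast
qed

locale plqca =
  fixes Sigs :: "nat \<Rightarrow> 'a set" and q :: "'a list" and N :: "int list"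
    and \<delta>Q :: "'a list \<Rightarrow> 'a list \<Rightarrow> complex"
  assumes lqca: "lqca (PSig Sigs (length N)) q N (\<lambda>w. \<delta>Q (delta_p (length N) w))"
begin

abbreviation "S \<equiv> PSig Sigs (length N)"
abbreviation "X \<equiv> configs S q"
abbreviation "\<delta> \<equiv> \<lambda>w. \<delta>Q (delta_p (length N) w)"
abbreviation "Q \<equiv> \<lambda>y x. \<delta>Q x y"

lemma finite_S: "finite S" and q_in_S: "q \<in> S"
  using lqca by (auto simp: lqca_def)

lemma Q_quiescent_column: "y \<in> S \<Longrightarrow> Q y q = (if y = q then 1 else 0)"
proof -
  assume "y \<in> S"
  moreover have "delta_p (length N) (replicate (length N) q) = q"
    using q_in_S by (intro nth_equalityI) (auto simp: delta_p_def PSig_def)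
  ultimately show ?thesis using lqca by (force simp: lqca_def)
qed

lemma Q_unit_diagonal: "Q q q = 1"
  using Q_quiescent_column[OF q_in_S] by simp

lemma U_coef_eq_prod_kernel:
  assumes d: "d \<in> X" and c: "c \<in> X"
  shows "U_coef q N \<delta> d c = prod_kernel q Q d (partition_shift N c)"
proof -
  let ?F = "{i. d i \<noteq> q \<or> (\<exists>a\<in>set N. c (i + a) \<noteq> q)}"
  have "finite {i. \<exists>a\<in>set N. c (i + a) \<noteq> q}"
    using c by (intro finite_neighbourhood_support) (simp add: configs_def)
  then have "finite ?F"
    using d unfolding Collect_disj_eq by (simp add: configs_def)
  moreover have "{i. d i \<noteq> q \<or> partition_shift N c i \<noteq> q} \<subseteq> ?F"
    using partition_shift_support[of q N c] q_in_S by (auto simp: PSig_def)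
  ultimately have "prod_kernel q Q d (partition_shift N c)
      = (\<Prod>i\<in>?F. \<delta>Q (partition_shift N c i) (d i))"
    by (rule prod_kernel_eq_prod[of Q q, OF Q_unit_diagonal])
  then show ?thesis by (simp add: U_coef_def delta_p_nbhd)
qed

lemma unitary_evolution_if_unitary_mat:
  assumes "unitary_mat S Q"
  shows "unitary_evolution S q N \<delta>"
proof -
  have "unitary_kernel X (prod_kernel q Q)"
    by (rule unitary_kernel_prod_kernel[OF finite_S q_in_S assms Q_unit_diagonal])
  then have "unitary_kernel X (\<lambda>d c. prod_kernel q Q d (partition_shift N c))"
    by (rule unitary_kernel_reindex_columns[OF _ bij_betw_partition_shift[OF q_in_S]])
  moreover have "unitary_kernel X (U_coef q N \<delta>)
      \<longleftrightarrow> unitary_kernel X (\<lambda>d c. prod_kernel q Q d (partition_shift N c))"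
    by (rule unitary_kernel_cong) (simp add: U_coef_eq_prod_kernel)
  ultimately have K: "unitary_kernel X (U_coef q N \<delta>)" by simp
  have l2_eq: "l2 S q = l2_space X" by (simp add: l2_def l2_space_def)
  have U_eq: "U_op S q N \<delta> = kernel_op X (U_coef q N \<delta>)"
    by (intro ext) (simp add: U_op_def kernel_op_def)
  show ?thesis
    unfolding unitary_evolution_def well_formed_def l2norm_def l2_eq U_eq
    using unitary_kernel_row_summable[OF K] kernel_op_in_l2[OF K] unitary_kernel_op_norm[OF K]
      bij_betw_unitary_kernel_op[OF K]
    by (intro conjI ballI) auto
qed



definition cell_preimage :: "'a list \<Rightarrow> int \<Rightarrow> 'a list" where
  "cell_preimage x = partition_shift (map uminus N) (single_config q x)"

lemma cell_preimage_in_configs: "x \<in> S \<Longrightarrow> cell_preimage x \<in> X"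
  and partition_shift_cell_preimage:
    "x \<in> S \<Longrightarrow> partition_shift N (cell_preimage x) = single_config q x"
proof -
  assume "x \<in> S"
  then have "single_config q x \<in> configs (PSig Sigs (length (map uminus N))) q"
    using single_config_in_configs[OF q_in_S] by simp
  moreover have "map uminus (map uminus N) = N" by (simp add: map_idI)
  ultimately show "cell_preimage x \<in> X" "partition_shift N (cell_preimage x) = single_config q x"
    using partition_shift_in_configs[of q Sigs "map uminus N"] q_in_S
      partition_shift_inverse[of "single_config q x" Sigs "map uminus N" q]
    by (simp_all add: cell_preimage_def)
qed

lemma inj_on_cell_preimage: "inj_on cell_preimage S"
  by (rule inj_on_inverseI[where g = "\<lambda>e. partition_shift N e 0"])
    (simp add: partition_shift_cell_preimage single_config_def)

(* U_A maps a vector with values a on the cell preimages to Q a placed at cell 0. *)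
lemma isometry_if_well_formed:
  assumes wf: "well_formed S q N \<delta>"
  shows "(\<Sum>y\<in>S. (cmod (\<Sum>x\<in>S. Q y x * a x))\<^sup>2) = (\<Sum>x\<in>S. (cmod (a x))\<^sup>2)"
proof -
  have cS_X: "cell_preimage ` S \<subseteq> X" using cell_preimage_in_configs by auto
  define u where "u e = (if e \<in> cell_preimage ` S then a (partition_shift N e 0) else 0)" for e
  have u_c: "u (cell_preimage x) = a x" if "x \<in> S" for x
    using that partition_shift_cell_preimage by (simp add: u_def single_config_def)
  have u_out: "u e = 0" if "e \<notin> cell_preimage ` S" for e
    using that by (simp add: u_def)
  have "(\<lambda>e. (cmod (u e))\<^sup>2) summable_on X"
    by (rule infsum_finite_support(1)[OF _ cS_X]) (use finite_S u_out in auto)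
  then have u_l2: "u \<in> l2 S q"
    unfolding l2_def using cS_X u_out by blast
  have norm_u: "(\<Sum>\<^sub>\<infinity>e\<in>X. (cmod (u e))\<^sup>2) = (\<Sum>x\<in>S. (cmod (a x))\<^sup>2)"
    by (subst infsum_image_finite_support[OF finite_S inj_on_cell_preimage cS_X])
      (auto simp: u_out u_c)
  have Uu: "U_op S q N \<delta> u d = (if d \<in> single_config q ` S then \<Sum>x\<in>S. Q (d 0) x * a x else 0)"
    if d: "d \<in> X" for d
  proof -
    have "U_op S q N \<delta> u d = (\<Sum>x\<in>S. U_coef q N \<delta> d (cell_preimage x) * u (cell_preimage x))"
      using d
      by (simp add: U_op_def infsum_image_finite_support[OF finite_S inj_on_cell_preimage cS_X] u_out)
    also have "\<dots> = (\<Sum>x\<in>S. prod_kernel q Q d (single_config q x) * a x)"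
      using d by (intro sum.cong refl)
        (simp add: U_coef_eq_prod_kernel cell_preimage_in_configs partition_shift_cell_preimage u_c)
    also have "\<dots> = (if d \<in> single_config q ` S then \<Sum>x\<in>S. Q (d 0) x * a x else 0)"
      using prod_kernel_single_config[of Q q, OF Q_unit_diagonal _ d q_in_S] Q_quiescent_column
      by simp
    finally show ?thesis .
  qed
  have norm_Uu: "(\<Sum>\<^sub>\<infinity>d\<in>X. (cmod (U_op S q N \<delta> u d))\<^sup>2) = (\<Sum>y\<in>S. (cmod (\<Sum>x\<in>S. Q y x * a x))\<^sup>2)"
    using single_config_in_configs[OF q_in_S]
    by (subst infsum_image_finite_support[OF finite_S inj_on_subset[OF inj_single_config]])
      (auto simp: Uu single_config_def)
  have "l2norm S q (U_op S q N \<delta> u) = l2norm S q u"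
    using wf u_l2 by (simp add: well_formed_def)
  then show ?thesis using norm_u norm_Uu by (simp add: l2norm_def)
qed

lemma unitary_mat_if_well_formed:
  assumes "well_formed S q N \<delta>"
  shows "unitary_mat S Q"
proof (rule unitary_mat_if_orthonormal_columns[OF finite_S], intro ballI)
  fix x x' assume "x \<in> S" "x' \<in> S"
  then show "(\<Sum>y\<in>S. cnj (Q y x) * Q y x') = (if x = x' then 1 else 0)"
    by (rule isometry_orthonormal_columns[OF finite_S isometry_if_well_formed[OF assms]])
qed

end

theorem theorem6:
  fixes Sigs :: "nat \<Rightarrow> 'a set" and q :: "'a list" and N :: "int list"
    and \<delta>Q :: "'a list \<Rightarrow> 'a list \<Rightarrow> complex"
  assumes "\<forall>j < length N. finite (Sigs j) \<and> Sigs j \<noteq> {}"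
    and "lqca (PSig Sigs (length N)) q N (\<lambda>w. \<delta>Q (delta_p (length N) w))"
  shows "(unitary_mat (PSig Sigs (length N)) (\<lambda>y x. \<delta>Q x y)
            \<longleftrightarrow> well_formed (PSig Sigs (length N)) q N (\<lambda>w. \<delta>Q (delta_p (length N) w)))
       \<and> (well_formed (PSig Sigs (length N)) q N (\<lambda>w. \<delta>Q (delta_p (length N) w))
            \<longleftrightarrow> unitary_evolution (PSig Sigs (length N)) q N (\<lambda>w. \<delta>Q (delta_p (length N) w)))"
proof -
  interpret plqca Sigs q N \<delta>Q by (rule plqca.intro) (rule assms(2))
  have "unitary_evolution (PSig Sigs (length N)) q N (\<lambda>w. \<delta>Q (delta_p (length N) w))
      \<Longrightarrow> well_formed (PSig Sigs (length N)) q N (\<lambda>w. \<delta>Q (delta_p (length N) w))"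
    by (simp add: unitary_evolution_def)
  then show ?thesis
    using unitary_evolution_if_unitary_mat unitary_mat_if_well_formed by blast
qed

end
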